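(* Let $d>1$ be an integer. With $\mathcal{L}_d$ the vector bundle on $\mathbb{P}^5=\mathbb{P}(\wedge^2S_1)$ defined as the kernel of $\bar\tau_d\otimes 1: H^0(\mathbb{P}^3,T\mathbb{P}^3(d-1))\otimes\mathcal{O}_{\mathbb{P}^5}\to S_{d+1}\otimes\mathcal{O}_{\mathbb{P}^5}(1)$, $\varphi\otimes\omega\mapsto\omega\cdot\varphi$, let $\mathbb{P}(\mathcal{L}_d)\subset\mathbb{P}^5\times\mathbb{F}_d$ be the associated projective subbundle and $\mathbb{L}_d\subset\mathbb{F}_d$ its image under the second projection $\mathbf{p}$ (the variety of Legendrian foliations of degree $d$). Then $\mathbf{p}:\mathbb{P}(\mathcal{L}_d)\to\mathbb{L}_d$ is generically bijective; i.e. a general $\varphi\in\mathbb{L}_d$ is tangent to one and only one distribution $\omega\in\mathbb{P}^5\setminus\mathbb{G}$.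
   Context: Work over $\mathbb{C}$. Let $x_1,\dots,x_4$ be homogeneous coordinates on $\mathbb{P}^3$, $S_k$ the space of homogeneous polynomials of degree $k$ in $x_1,\dots,x_4$, $\partial_R=\sum x_i\partial_{x_i}$. The space of foliations of dimension one and degree $d$ is $\mathbb{F}_d:=\mathbb{P}(H^0(\mathbb{P}^3,T\mathbb{P}^3(d-1)))$ with $H^0(\mathbb{P}^3,T\mathbb{P}^3(d-1))=(S_d\otimes\langle\partial_{x_1},\dots,\partial_{x_4}\rangle)/(S_{d-1}\cdot\partial_R)$, elements represented by $\varphi=\sum p_i\partial_{x_i}$, $p_i\in S_d$. Points of $\mathbb{P}^5=\mathbb{P}(\wedge^2S_1)$ are degree-$0$ distributions $\omega=\sum_{i<j}\alpha_{ij}(x_jdx_i-x_idx_j)$ (antisymmetric $4\times 4$ matrices up to scalar); with $\omega=\sum a_idx_i$, set $\omega\cdot\varphi:=\sum a_ip_i\in S_{d+1}$, and $\varphi$ is tangent to $\omega$ if $\omega\cdot\varphi=0$. $\mathbb{G}\subset\mathbb{P}^5$ is the Pfaff–Plücker quadric of rank-$2$ matrices; its complement consists of contact forms (rank $4$). The kernel sheaf $\mathcal{L}_d$ is locally free on $\mathbb{P}^5$; over $\mathbb{P}^5\setminus\mathbb{G}$ its fiber at $\omega$ is $\{\varphi\mid\omega\cdot\varphi=0\}$. *)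

theory Defs
  imports Complex_Main "HOL-Library.Poly_Mapping"
begin

text \<open>Polynomials in the variables x_0,...,x_3 (indices 0..3 stand for x_1..x_4) with
complex coefficients: finitely supported maps from monomials (exponent vectors) to coefficients.\<close>

type_synonym mpoly = "(nat \<Rightarrow>\<^sub>0 nat) \<Rightarrow>\<^sub>0 complex"

definition var :: "nat \<Rightarrow> mpoly" where
  "var i = Poly_Mapping.single (Poly_Mapping.single i 1) 1"

definition const :: "complex \<Rightarrow> mpoly" where
  "const c = Poly_Mapping.single 0 c"

text \<open>p lies in S_k: homogeneous of degree k in x_0..x_3 (0 is in every S_k).\<close>
definition hom :: "nat \<Rightarrow> mpoly \<Rightarrow> bool" where
  "hom k p \<longleftrightarrow> (\<forall>m \<in> Poly_Mapping.keys p. Poly_Mapping.keys (m::nat \<Rightarrow>\<^sub>0 nat) \<subseteq> {..<4} \<and> (\<Sum>i<4. Poly_Mapping.lookup m i) = k)"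

text \<open>Representatives phi = sum p_i d/dx_i with p_i in S_d: the space S_d \<otimes> <d/dx_i>.\<close>
definition VF :: "nat \<Rightarrow> (nat \<Rightarrow> mpoly) set" where
  "VF d = {\<phi>. (\<forall>i<4. hom d (\<phi> i)) \<and> (\<forall>i\<ge>4. \<phi> i = 0)}"

definition Rad :: "nat \<Rightarrow> (nat \<Rightarrow> mpoly) set" where
  "Rad d = {\<phi>. \<exists>g. hom (d - 1) g \<and> (\<forall>i<4. \<phi> i = g * var i) \<and> (\<forall>i\<ge>4. \<phi> i = 0)}"

text \<open>Degree-0 distributions: antisymmetric 4x4 matrices alpha (indices 0..3).\<close>
definition antisym4 :: "(nat \<Rightarrow> nat \<Rightarrow> complex) \<Rightarrow> bool" where
  "antisym4 A \<longleftrightarrow> (\<forall>i j. A i j = - A j i) \<and> (\<forall>i j. 4 \<le> i \<or> 4 \<le> j \<longrightarrow> A i j = 0)"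

text \<open>Pfaffian; the Pfaff-Pluecker quadric G is its zero locus (rank-2 matrices).\<close>
definition pfaff :: "(nat \<Rightarrow> nat \<Rightarrow> complex) \<Rightarrow> complex" where
  "pfaff A = A 0 1 * A 2 3 - A 0 2 * A 1 3 + A 0 3 * A 1 2"

definition contact :: "(nat \<Rightarrow> nat \<Rightarrow> complex) \<Rightarrow> bool" where
  "contact A \<longleftrightarrow> antisym4 A \<and> pfaff A \<noteq> 0"

text \<open>omega = sum_{i<j} A i j (x_j dx_i - x_i dx_j) = sum_i a_i dx_i with
  a_i = sum_j A i j x_j.\<close>
definition form_coeff :: "(nat \<Rightarrow> nat \<Rightarrow> complex) \<Rightarrow> nat \<Rightarrow> mpoly" where
  "form_coeff A i = (\<Sum>j<4. const (A i j) * var j)"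

definition tangent :: "(nat \<Rightarrow> nat \<Rightarrow> complex) \<Rightarrow> (nat \<Rightarrow> mpoly) \<Rightarrow> bool" where
  "tangent A \<phi> \<longleftrightarrow> (\<Sum>i<4. form_coeff A i * \<phi> i) = 0"

inductive_set polyfun :: "((nat \<Rightarrow> mpoly) \<Rightarrow> complex) set" where
  pf_const: "(\<lambda>\<phi>. c) \<in> polyfun"
| pf_coord: "(\<lambda>\<phi>. Poly_Mapping.lookup (\<phi> i) m) \<in> polyfun"
| pf_add: "f \<in> polyfun \<Longrightarrow> g \<in> polyfun \<Longrightarrow> (\<lambda>\<phi>. f \<phi> + g \<phi>) \<in> polyfun"
| pf_mult: "f \<in> polyfun \<Longrightarrow> g \<in> polyfun \<Longrightarrow> (\<lambda>\<phi>. f \<phi> * g \<phi>) \<in> polyfun"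

definition zclosure :: "nat \<Rightarrow> (nat \<Rightarrow> mpoly) set \<Rightarrow> (nat \<Rightarrow> mpoly) set" where
  "zclosure d A = {\<phi> \<in> VF d. \<forall>f \<in> polyfun. (\<forall>\<psi> \<in> A. f \<psi> = 0) \<longrightarrow> f \<phi> = 0}"

text \<open>Representatives of foliations (nonzero in H^0(TP^3(d-1))) tangent to some contact form.\<close>
definition tangent_to_contact :: "nat \<Rightarrow> (nat \<Rightarrow> mpoly) set" where
  "tangent_to_contact d = {\<phi> \<in> VF d. \<phi> \<notin> Rad d \<and> (\<exists>A. contact A \<and> tangent A \<phi>)}"

text \<open>Representatives of points of L_d = p(P(L_d)) = closure of the foliations tangent to a
contact form.\<close>
definition Legendrian :: "nat \<Rightarrow> (nat \<Rightarrow> mpoly) set" where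
  "Legendrian d = {\<phi> \<in> zclosure d (tangent_to_contact d). \<phi> \<notin> Rad d}"

end

theory Submission
  imports Defs "Jordan_Normal_Form.Determinant"
begin

(* Tangency of phi to omega = sum_k alpha_k (x_j dx_i - x_i dx_j) is a linear system in the six
   Pluecker coordinates alpha_k, with one equation for each monomial of degree d + 1. Fix five of
   these equations. The signed 5 x 5 minors of their coefficient matrix form a vector K(phi) that
   depends polynomially on phi and spans the solutions of the five equations whenever it is
   nonzero. If phi is tangent to a contact form, the system has a nonzero solution, so every
   6 x 6 determinant made of the five fixed rows and one further row vanishes. This closed
   condition passes to the Zariski closure, where it says that K(phi) solves the whole system.
   So where the Pfaffian of K(phi) is nonzero, K(phi) is, up to scaling, the only contact form
   tangent to phi. An explicit foliation shows that this open set meets L_d. *)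

lemma polyfun_cmult: "f \<in> polyfun \<Longrightarrow> (\<lambda>\<phi>. c * f \<phi>) \<in> polyfun"
  using pf_mult[OF pf_const] by blast

lemma polyfun_diff: "f \<in> polyfun \<Longrightarrow> g \<in> polyfun \<Longrightarrow> (\<lambda>\<phi>. f \<phi> - g \<phi>) \<in> polyfun"
  using pf_add[OF _ polyfun_cmult[of g "-1"]] by simp

lemma polyfun_sum:
  "finite S \<Longrightarrow> (\<And>x. x \<in> S \<Longrightarrow> h x \<in> polyfun) \<Longrightarrow> (\<lambda>\<phi>. \<Sum>x\<in>S. h x \<phi>) \<in> polyfun"
proof (induction S rule: finite_induct)
  case empty
  then show ?case using pf_const[of 0] by simp
next
  case (insert x F)
  then show ?case using pf_add[of "h x" "\<lambda>\<phi>. \<Sum>x\<in>F. h x \<phi>"] by simp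
qed

lemma polyfun_prod:
  "finite S \<Longrightarrow> (\<And>x. x \<in> S \<Longrightarrow> h x \<in> polyfun) \<Longrightarrow> (\<lambda>\<phi>. \<Prod>x\<in>S. h x \<phi>) \<in> polyfun"
proof (induction S rule: finite_induct)
  case empty
  then show ?case using pf_const[of 1] by simp
next
  case (insert x F)
  then show ?case using pf_mult[of "h x" "\<lambda>\<phi>. \<Prod>x\<in>F. h x \<phi>"] by simp
qed

lemma polyfun_if: "f \<in> polyfun \<Longrightarrow> g \<in> polyfun \<Longrightarrow> (\<lambda>\<phi>. if P then f \<phi> else g \<phi>) \<in> polyfun"
  by (cases P) simp_all

lemma polyfun_det:
  assumes "\<And>i j. i < n \<Longrightarrow> j < n \<Longrightarrow> (\<lambda>\<phi>. a \<phi> (i, j)) \<in> polyfun"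
  shows "(\<lambda>\<phi>. det (mat n n (a \<phi>))) \<in> polyfun"
proof -
  let ?P = "{p. p permutes {0..<n}}"
  have leibniz: "det (mat n n (a \<phi>)) = (\<Sum>p\<in>?P. signof p * (\<Prod>i = 0..<n. a \<phi> (i, p i)))" for \<phi>
    by (subst det_def'[of _ n]) (auto intro!: sum.cong prod.cong simp: permutes_in_image)
  have "(\<lambda>\<phi>. \<Sum>p\<in>?P. signof p * (\<Prod>i = 0..<n. a \<phi> (i, p i))) \<in> polyfun"
    using assms
    by (intro polyfun_sum polyfun_cmult polyfun_prod)
      (auto simp: finite_permutations permutes_in_image)
  then show ?thesis unfolding leibniz .
qed

lemma polyfun_vanishes_on_zclosure:
  assumes "\<phi> \<in> zclosure d S" "f \<in> polyfun" "\<And>\<psi>. \<psi> \<in> S \<Longrightarrow> f \<psi> = 0"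
  shows "f \<phi> = 0"
  using assms unfolding zclosure_def by blast

section \<open>Bordered matrices and generalized cross products\<close>

lemma det_mat_eq_0_iff_kernel:
  "det (mat n n a) = (0::'a::field) \<longleftrightarrow>
     (\<exists>x. (\<exists>j<n. x j \<noteq> 0) \<and> (\<forall>i<n. (\<Sum>j<n. a (i, j) * x j) = 0))"
proof -
  have vec_of_carrier: "vec n (($) v) = v" if "v \<in> carrier_vec n" for v :: "'a vec"
    using that by (auto simp: vec_eq_iff)
  have "det (mat n n a) = 0 \<longleftrightarrow>
      (\<exists>v. v \<in> carrier_vec n \<and> v \<noteq> 0\<^sub>v n \<and> mat n n a *\<^sub>v v = 0\<^sub>v n)"
    by (rule det_0_iff_vec_prod_zero_field) simp
  also have "\<dots> \<longleftrightarrow> (\<exists>x. vec n x \<noteq> 0\<^sub>v n \<and> mat n n a *\<^sub>v vec n x = 0\<^sub>v n)"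
    by (metis vec_of_carrier vec_carrier)
  also have "\<dots> \<longleftrightarrow> (\<exists>x. (\<exists>j<n. x j \<noteq> 0) \<and> (\<forall>i<n. (\<Sum>j<n. a (i, j) * x j) = 0))"
    by (auto simp: vec_eq_iff scalar_prod_def atLeast0LessThan)
  finally show ?thesis .
qed

definition bordered_mat :: "nat \<Rightarrow> (nat \<Rightarrow> nat \<Rightarrow> 'a) \<Rightarrow> (nat \<Rightarrow> 'a) \<Rightarrow> 'a mat" where
  "bordered_mat k r v = mat (Suc k) (Suc k) (\<lambda>(i, j). if i < k then r i j else v j)"

(* The generalized cross product of the rows r 0, ..., r (k - 1): its c-th entry is, up to sign,
   the maximal minor of this k x (k + 1) matrix omitting column c. *)
definition cross_vec :: "nat \<Rightarrow> (nat \<Rightarrow> nat \<Rightarrow> 'a::comm_ring_1) \<Rightarrow> nat \<Rightarrow> 'a" where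
  "cross_vec k r c = det (bordered_mat k r (\<lambda>j. if j = c then 1 else 0))"

lemma bordered_mat_carrier: "bordered_mat k r v \<in> carrier_mat (Suc k) (Suc k)"
  unfolding bordered_mat_def by simp

lemma det_bordered_mat:
  fixes r :: "nat \<Rightarrow> nat \<Rightarrow> 'a::comm_ring_1"
  shows "det (bordered_mat k r v) = (\<Sum>c<Suc k. v c * cross_vec k r c)"
proof -
  let ?C = "cofactor (bordered_mat k r (\<lambda>_. 0)) k"
  have delete_last_row:
    "mat_delete (bordered_mat k r v) k j = mat_delete (bordered_mat k r (\<lambda>_. 0)) k j" for v j
    unfolding mat_delete_def by (rule eq_matI) (auto simp: bordered_mat_def)
  have cofactor_last_row: "cofactor (bordered_mat k r v) k j = ?C j" for v j
    unfolding cofactor_def delete_last_row[of v j] ..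
  have laplace: "det (bordered_mat k r v) = (\<Sum>j<Suc k. v j * ?C j)" for v
  proof -
    have "det (bordered_mat k r v) =
        (\<Sum>j<Suc k. bordered_mat k r v $$ (k, j) * cofactor (bordered_mat k r v) k j)"
      by (rule laplace_expansion_row[OF bordered_mat_carrier]) simp
    also have "\<dots> = (\<Sum>j<Suc k. v j * ?C j)"
      by (intro sum.cong refl) (simp only: cofactor_last_row[of v], simp add: bordered_mat_def)
    finally show ?thesis .
  qed
  have "cross_vec k r c = ?C c" if "c < Suc k" for c
    using that by (simp add: cross_vec_def laplace if_distrib[of "\<lambda>x. x * _"] cong: if_cong)
  then show ?thesis unfolding laplace by (intro sum.cong) simp_all
qed

lemma cross_vec_orthogonal:
  fixes r :: "nat \<Rightarrow> nat \<Rightarrow> 'a::comm_ring_1"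
  assumes "i < k"
  shows "(\<Sum>c<Suc k. r i c * cross_vec k r c) = 0"
proof -
  have "det (bordered_mat k r (r i)) = 0"
    using assms by (intro det_identical_rows[OF bordered_mat_carrier, of i k])
      (auto simp: bordered_mat_def row_def)
  then show ?thesis by (simp add: det_bordered_mat)
qed

lemma det_bordered_mat_eq_0_iff:
  fixes r :: "nat \<Rightarrow> nat \<Rightarrow> 'a::field"
  shows "det (bordered_mat k r v) = 0 \<longleftrightarrow>
    (\<exists>x. (\<exists>j<Suc k. x j \<noteq> 0) \<and> (\<forall>i<k. (\<Sum>j<Suc k. r i j * x j) = 0)
       \<and> (\<Sum>j<Suc k. v j * x j) = 0)"
  unfolding bordered_mat_def det_mat_eq_0_iff_kernel
  by (simp add: less_Suc_eq all_conj_distrib conj_commute del: sum.lessThan_Suc)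

lemma cross_vec_eq_0_iff:
  fixes r :: "nat \<Rightarrow> nat \<Rightarrow> 'a::field"
  assumes "c < Suc k"
  shows "cross_vec k r c = 0 \<longleftrightarrow>
    (\<exists>x. (\<exists>j<Suc k. x j \<noteq> 0) \<and> (\<forall>i<k. (\<Sum>j<Suc k. r i j * x j) = 0) \<and> x c = 0)"
  using assms unfolding cross_vec_def det_bordered_mat_eq_0_iff
  by (simp add: if_distrib[of "\<lambda>x. x * _"] del: sum.lessThan_Suc cong: if_cong)

lemma kernel_eq_cross_vec_multiple:
  fixes r :: "nat \<Rightarrow> nat \<Rightarrow> 'a::field"
  assumes K: "cross_vec k r c \<noteq> 0" and x: "\<forall>i<k. (\<Sum>j<Suc k. r i j * x j) = 0"
  shows "\<forall>j<Suc k. x j = x c / cross_vec k r c * cross_vec k r j"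
proof -
  let ?K = "cross_vec k r"
  define w where "w j = ?K c * x j - x c * ?K j" for j
  have c: "c < Suc k"
  proof (rule ccontr)
    assume "\<not> c < Suc k"
    then have "?K c = 0" by (subst cross_vec_def, subst det_bordered_mat) simp
    with K show False by contradiction
  qed
  have "(\<Sum>j<Suc k. r i j * w j) =
      ?K c * (\<Sum>j<Suc k. r i j * x j) - x c * (\<Sum>j<Suc k. r i j * ?K j)" for i
    by (simp add: w_def algebra_simps sum_subtractf sum_distrib_left del: sum.lessThan_Suc)
  then have "\<forall>i<k. (\<Sum>j<Suc k. r i j * w j) = 0"
    using x cross_vec_orthogonal[of _ k r] by simp
  moreover have "w c = 0" by (simp add: w_def)
  ultimately have "\<forall>j<Suc k. w j = 0"
    using K cross_vec_eq_0_iff[OF c, of r] by blast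
  then show ?thesis using K by (auto simp: w_def field_simps)
qed

lemma lookup_single_mult:
  fixes p :: mpoly
  shows "Poly_Mapping.lookup (Poly_Mapping.single a c * p) (a + m) = c * Poly_Mapping.lookup p m"
  by (simp add: lookup_mult lookup_single when_mult mult_when Sum_any_right_distrib)

lemma lookup_single_mult_eq_0:
  fixes p :: mpoly
  assumes "\<forall>m. k \<noteq> a + m"
  shows "Poly_Mapping.lookup (Poly_Mapping.single a c * p) k = 0"
  using assms by (simp add: lookup_mult lookup_single when_mult mult_when Sum_any_right_distrib)

lemma lookup_const_mult: "Poly_Mapping.lookup (const c * p) m = c * Poly_Mapping.lookup p m"
  unfolding const_def using lookup_single_mult[of 0 c p m] by simp

lemma const_0 [simp]: "const 0 = 0"
  unfolding const_def by simp

lemma const_1 [simp]: "const 1 = 1"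
  unfolding const_def by simp

lemma const_uminus: "const (- c) = - const c"
  unfolding const_def by (simp add: single_uminus)

lemma polyfun_lookup_var_mult: "(\<lambda>\<phi>. Poly_Mapping.lookup (var j * \<phi> i) m) \<in> polyfun"
proof (cases "\<exists>m'. m = Poly_Mapping.single j 1 + m'")
  case True
  then obtain m' where "m = Poly_Mapping.single j 1 + m'" by blast
  then show ?thesis by (simp add: var_def lookup_single_mult pf_coord)
next
  case False
  then show ?thesis unfolding var_def using lookup_single_mult_eq_0 pf_const[of 0] by simp
qed

definition mon4 :: "nat \<Rightarrow> nat \<Rightarrow> nat \<Rightarrow> nat \<Rightarrow> (nat \<Rightarrow>\<^sub>0 nat)" where
  "mon4 a b c e = Poly_Mapping.single 0 a + Poly_Mapping.single 1 b
     + Poly_Mapping.single 2 c + Poly_Mapping.single 3 e"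

lemma lookup_mon4: "Poly_Mapping.lookup (mon4 a b c e) i =
  (if i = 0 then a else if i = 1 then b else if i = 2 then c else if i = 3 then e else 0)"
  unfolding mon4_def by (simp add: lookup_add lookup_single when_def)

lemma mon4_eq_iff [simp]:
  "mon4 a b c e = mon4 a' b' c' e' \<longleftrightarrow> a = a' \<and> b = b' \<and> c = c' \<and> e = e'"
proof
  assume eq: "mon4 a b c e = mon4 a' b' c' e'"
  show "a = a' \<and> b = b' \<and> c = c' \<and> e = e'"
    using arg_cong[OF eq, of "\<lambda>m. Poly_Mapping.lookup m 0"] arg_cong[OF eq, of "\<lambda>m. Poly_Mapping.lookup m 1"]
      arg_cong[OF eq, of "\<lambda>m. Poly_Mapping.lookup m 2"] arg_cong[OF eq, of "\<lambda>m. Poly_Mapping.lookup m 3"]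
    by (simp add: lookup_mon4)
qed simp

lemma mon4_add [simp]: "mon4 a b c e + mon4 a' b' c' e' = mon4 (a + a') (b + b') (c + c') (e + e')"
  unfolding mon4_def by (simp add: single_add algebra_simps)

lemma var_eq_single_mon4:
  "var 0 = Poly_Mapping.single (mon4 1 0 0 0) 1" "var 1 = Poly_Mapping.single (mon4 0 1 0 0) 1"
  "var 2 = Poly_Mapping.single (mon4 0 0 1 0) 1" "var 3 = Poly_Mapping.single (mon4 0 0 0 1) 1"
  unfolding var_def mon4_def by simp_all

lemma sum_lessThan_4:
  fixes g :: "nat \<Rightarrow> 'a::comm_monoid_add"
  shows "(\<Sum>i<4. g i) = g 0 + g 1 + g 2 + g 3"
  by (simp add: eval_nat_numeral lessThan_Suc add.commute add.left_commute)

lemma sum_lessThan_6: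
  fixes g :: "nat \<Rightarrow> 'a::comm_monoid_add"
  shows "(\<Sum>i<6. g i) = g 0 + g 1 + g 2 + g 3 + g 4 + g 5"
  by (simp add: eval_nat_numeral lessThan_Suc add.commute add.left_commute)

lemma hom_single_mon4: "a + b + c + e = k \<Longrightarrow> Defs.hom k (Poly_Mapping.single (mon4 a b c e) x)"
  unfolding Defs.hom_def
  by (auto simp: sum_lessThan_4 lookup_mon4 in_keys_iff split: if_splits)

lemma hom_zero: "Defs.hom k 0"
  unfolding Defs.hom_def by simp

lemma hom_add: "Defs.hom k p \<Longrightarrow> Defs.hom k q \<Longrightarrow> Defs.hom k (p + q)"
  unfolding Defs.hom_def using keys_add[of p q] by blast

section \<open>Pluecker coordinates of degree-0 distributions\<close>

(* The pairs i < j in {0..3}, in the order (0,1), (0,2), (0,3), (1,2), (1,3), (2,3), are indexed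
   by k < 6; pair_index is the inverse enumeration. *)
definition pair_fst :: "nat \<Rightarrow> nat" where
  "pair_fst k = (if k < 3 then 0 else if k < 5 then 1 else 2)"

definition pair_snd :: "nat \<Rightarrow> nat" where
  "pair_snd k = (if k < 3 then k + 1 else if k < 5 then k - 1 else 3)"

definition pair_index :: "nat \<Rightarrow> nat \<Rightarrow> nat" where
  "pair_index i j = (if i = 0 then j - 1 else i + j)"

lemma pair_fst_pair_snd [simp]:
  "pair_fst 0 = 0" "pair_snd 0 = 1" "pair_fst 1 = 0" "pair_snd 1 = 2" "pair_fst 2 = 0" "pair_snd 2 = 3"
  "pair_fst 3 = 1" "pair_snd 3 = 2" "pair_fst 4 = 1" "pair_snd 4 = 3" "pair_fst 5 = 2" "pair_snd 5 = 3"
  "pair_fst (Suc 0) = 0" "pair_snd (Suc 0) = 2"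
  by (simp_all add: pair_fst_def pair_snd_def)

definition plucker :: "(nat \<Rightarrow> nat \<Rightarrow> complex) \<Rightarrow> nat \<Rightarrow> complex" where
  "plucker A k = A (pair_fst k) (pair_snd k)"

definition of_plucker :: "(nat \<Rightarrow> complex) \<Rightarrow> nat \<Rightarrow> nat \<Rightarrow> complex" where
  "of_plucker x i j =
     (if i < j \<and> j < 4 then x (pair_index i j) else if j < i \<and> i < 4 then - x (pair_index j i) else 0)"

lemma antisym4_diag:
  assumes "antisym4 A"
  shows "A i i = 0"
proof -
  have "A i i = - A i i" using assms unfolding antisym4_def by blast
  then show ?thesis by simp
qed

lemma antisym4_of_plucker: "antisym4 (of_plucker x)"
  unfolding antisym4_def of_plucker_def by auto

lemma plucker_of_plucker: "k < 6 \<Longrightarrow> plucker (of_plucker x) k = x k"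
  unfolding plucker_def of_plucker_def pair_fst_def pair_snd_def pair_index_def
  by (auto simp: eval_nat_numeral less_Suc_eq)

lemma of_plucker_plucker:
  assumes "antisym4 A"
  shows "of_plucker (plucker A) = A"
proof -
  have upper: "of_plucker (plucker A) i j = A i j" if "i < j" "j < 4" for i j
  proof -
    from that have "(i, j) \<in> {(0, 1), (0, 2), (0, 3), (1, 2), (1, 3), (2, 3)}" by auto
    then show ?thesis
      unfolding of_plucker_def plucker_def pair_fst_def pair_snd_def pair_index_def
      by (auto simp: numeral_eq_Suc)
  qed
  show ?thesis
  proof (intro ext)
    fix i j :: nat
    consider "i < j" "j < 4" | "j < i" "i < 4" | "i = j \<or> 4 \<le> i \<or> 4 \<le> j" by linarith
    then show "of_plucker (plucker A) i j = A i j"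
    proof cases
      case 1
      then show ?thesis by (rule upper)
    next
      case 2
      have "of_plucker (plucker A) i j = - of_plucker (plucker A) j i"
        using antisym4_of_plucker unfolding antisym4_def by blast
      also have "\<dots> = - A j i" using upper 2 by simp
      also have "\<dots> = A i j"
        using assms unfolding antisym4_def by (metis minus_minus)
      finally show ?thesis .
    next
      case 3
      then have "A i j = 0"
        using assms antisym4_diag[OF assms, of i] unfolding antisym4_def by blast
      moreover have "of_plucker (plucker A) i j = 0"
        using 3 unfolding of_plucker_def by auto
      ultimately show ?thesis by simp
    qed
  qed
qed

lemma of_plucker_cong: "(\<And>k. k < 6 \<Longrightarrow> x k = y k) \<Longrightarrow> of_plucker x = of_plucker y"
  unfolding of_plucker_def pair_index_def by (intro ext) auto

lemma of_plucker_scale: "of_plucker (\<lambda>k. c * x k) = (\<lambda>i j. c * of_plucker x i j)"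
  unfolding of_plucker_def by (intro ext) simp

lemma pfaff_of_plucker: "pfaff (of_plucker x) = x 0 * x 5 - x 1 * x 4 + x 2 * x 3"
  unfolding pfaff_def of_plucker_def pair_index_def by (simp add: numeral_eq_Suc)

lemma contact_plucker_nonzero:
  assumes "contact A"
  shows "\<exists>k<6. plucker A k \<noteq> 0"
proof (rule ccontr)
  assume "\<not> ?thesis"
  then have "pfaff (of_plucker (plucker A)) = 0" unfolding pfaff_of_plucker by simp
  then show False using assms of_plucker_plucker unfolding contact_def by simp
qed

definition basic_contraction :: "(nat \<Rightarrow> mpoly) \<Rightarrow> nat \<Rightarrow> mpoly" where
  "basic_contraction \<phi> k = var (pair_snd k) * \<phi> (pair_fst k) - var (pair_fst k) * \<phi> (pair_snd k)"

definition tangency_coeff :: "(nat \<Rightarrow> mpoly) \<Rightarrow> (nat \<Rightarrow>\<^sub>0 nat) \<Rightarrow> nat \<Rightarrow> complex" where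
  "tangency_coeff \<phi> m k = Poly_Mapping.lookup (basic_contraction \<phi> k) m"

lemma contraction_eq_sum_plucker:
  assumes "antisym4 A"
  shows "(\<Sum>i<4. form_coeff A i * \<phi> i) = (\<Sum>k<6. const (plucker A k) * basic_contraction \<phi> k)"
proof -
  have lower: "A 1 0 = - A 0 1" "A 2 0 = - A 0 2" "A 3 0 = - A 0 3"
    "A 2 1 = - A 1 2" "A 3 1 = - A 1 3" "A 3 2 = - A 2 3"
    using assms unfolding antisym4_def by blast+
  show ?thesis
    unfolding form_coeff_def basic_contraction_def plucker_def sum_lessThan_4 sum_lessThan_6
    by (simp add: antisym4_diag[OF assms] lower lower[unfolded One_nat_def] const_uminus
        algebra_simps)
qed

lemma tangent_iff_tangency_coeff:
  assumes "antisym4 A"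
  shows "tangent A \<phi> \<longleftrightarrow> (\<forall>m. (\<Sum>k<6. tangency_coeff \<phi> m k * plucker A k) = 0)"
proof -
  have "Poly_Mapping.lookup (\<Sum>i<4. form_coeff A i * \<phi> i) m = (\<Sum>k<6. tangency_coeff \<phi> m k * plucker A k)" for m
    unfolding contraction_eq_sum_plucker[OF assms] lookup_sum tangency_coeff_def lookup_const_mult
    by (simp add: mult.commute)
  moreover have "p = 0 \<longleftrightarrow> (\<forall>m. Poly_Mapping.lookup p m = 0)" for p :: mpoly
    by (auto intro: poly_mapping_eqI)
  ultimately show ?thesis unfolding tangent_def by simp
qed

lemma polyfun_tangency_coeff: "(\<lambda>\<phi>. tangency_coeff \<phi> m k) \<in> polyfun"
  unfolding tangency_coeff_def basic_contraction_def lookup_minus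
  by (intro polyfun_diff polyfun_lookup_var_mult)

lemma det_tangency_rows_eq_0:
  assumes "contact A" "tangent A \<psi>"
  shows "det (bordered_mat 5 (\<lambda>i. tangency_coeff \<psi> (ms i)) (tangency_coeff \<psi> m)) = 0"
proof -
  have "\<forall>m. (\<Sum>k<6. tangency_coeff \<psi> m k * plucker A k) = 0"
    using assms tangent_iff_tangency_coeff unfolding contact_def by blast
  moreover have "\<exists>k<6. plucker A k \<noteq> 0" by (rule contact_plucker_nonzero[OF assms(1)])
  ultimately show ?thesis
    unfolding det_bordered_mat_eq_0_iff by (intro exI[of _ "plucker A"]) simp
qed

definition tangency_cross_vec :: "(nat \<Rightarrow> nat \<Rightarrow>\<^sub>0 nat) \<Rightarrow> (nat \<Rightarrow> mpoly) \<Rightarrow> nat \<Rightarrow> complex" where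
  "tangency_cross_vec ms \<phi> = cross_vec 5 (\<lambda>r. tangency_coeff \<phi> (ms r))"

definition kernel_form :: "(nat \<Rightarrow> nat \<Rightarrow>\<^sub>0 nat) \<Rightarrow> (nat \<Rightarrow> mpoly) \<Rightarrow> nat \<Rightarrow> nat \<Rightarrow> complex" where
  "kernel_form ms \<phi> = of_plucker (tangency_cross_vec ms \<phi>)"

definition kernel_pfaffian :: "(nat \<Rightarrow> nat \<Rightarrow>\<^sub>0 nat) \<Rightarrow> (nat \<Rightarrow> mpoly) \<Rightarrow> complex" where
  "kernel_pfaffian ms \<phi> = pfaff (kernel_form ms \<phi>)"

lemma polyfun_det_tangency_rows:
  "(\<lambda>\<phi>. det (bordered_mat 5 (\<lambda>r. tangency_coeff \<phi> (ms r)) (v \<phi>))) \<in> polyfun"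
  if "\<And>j. (\<lambda>\<phi>. v \<phi> j) \<in> polyfun"
  unfolding bordered_mat_def using that polyfun_tangency_coeff
  by (intro polyfun_det) (simp add: case_prod_beta polyfun_if)

lemma polyfun_kernel_pfaffian: "kernel_pfaffian ms \<in> polyfun"
proof -
  have "(\<lambda>\<phi>. tangency_cross_vec ms \<phi> c) \<in> polyfun" for c
    unfolding tangency_cross_vec_def cross_vec_def
    by (rule polyfun_det_tangency_rows) (rule pf_const)
  then have "(\<lambda>\<phi>. pfaff (of_plucker (tangency_cross_vec ms \<phi>))) \<in> polyfun"
    unfolding pfaff_of_plucker by (intro pf_add polyfun_diff pf_mult)
  then show ?thesis unfolding kernel_pfaffian_def[abs_def] kernel_form_def .
qed

lemma zclosure_tangency_cross_vec_solves:
  assumes "\<phi> \<in> zclosure d (tangent_to_contact d)"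
  shows "(\<Sum>c<6. tangency_coeff \<phi> m c * tangency_cross_vec ms \<phi> c) = 0"
proof -
  let ?D = "\<lambda>\<psi>. det (bordered_mat 5 (\<lambda>r. tangency_coeff \<psi> (ms r)) (tangency_coeff \<psi> m))"
  have "?D \<phi> = 0"
  proof (rule polyfun_vanishes_on_zclosure[OF assms])
    show "?D \<in> polyfun" by (rule polyfun_det_tangency_rows) (rule polyfun_tangency_coeff)
    show "?D \<psi> = 0" if "\<psi> \<in> tangent_to_contact d" for \<psi>
      using that det_tangency_rows_eq_0 unfolding tangent_to_contact_def by blast
  qed
  then show ?thesis by (simp add: det_bordered_mat tangency_cross_vec_def)
qed

lemma tangent_kernel_form:
  assumes "\<phi> \<in> zclosure d (tangent_to_contact d)"
  shows "tangent (kernel_form ms \<phi>) \<phi>"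
proof -
  have "(\<Sum>k<6. tangency_coeff \<phi> m k * plucker (kernel_form ms \<phi>) k) = 0" for m
    using zclosure_tangency_cross_vec_solves[OF assms] by (simp add: kernel_form_def plucker_of_plucker)
  then show ?thesis
    using tangent_iff_tangency_coeff[OF antisym4_of_plucker] unfolding kernel_form_def by blast
qed

lemma contact_kernel_form: "kernel_pfaffian ms \<phi> \<noteq> 0 \<Longrightarrow> contact (kernel_form ms \<phi>)"
  unfolding contact_def kernel_pfaffian_def kernel_form_def using antisym4_of_plucker by simp

lemma contact_tangent_eq_smult_kernel_form:
  assumes "kernel_pfaffian ms \<phi> \<noteq> 0" "contact B" "tangent B \<phi>"
  shows "\<exists>s. B = (\<lambda>i j. s * kernel_form ms \<phi> i j)"
proof -
  let ?r = "\<lambda>i. tangency_coeff \<phi> (ms i)"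
  let ?K = "tangency_cross_vec ms \<phi>"
  have "\<exists>c. ?K c \<noteq> 0"
  proof (rule ccontr)
    assume "\<nexists>c. ?K c \<noteq> 0"
    then show False
      using assms(1) unfolding kernel_pfaffian_def kernel_form_def pfaff_of_plucker by simp
  qed
  then obtain c where c: "cross_vec 5 ?r c \<noteq> 0" unfolding tangency_cross_vec_def by blast
  have "\<forall>m. (\<Sum>k<6. tangency_coeff \<phi> m k * plucker B k) = 0"
    using assms(2,3) tangent_iff_tangency_coeff unfolding contact_def by blast
  then have "\<forall>i<5. (\<Sum>j<Suc 5. ?r i j * plucker B j) = 0" by simp
  from kernel_eq_cross_vec_multiple[OF c this]
  have proportional: "plucker B k = plucker B c / ?K c * ?K k" if "k < 6" for k
    using that unfolding tangency_cross_vec_def by simp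
  have "B = of_plucker (plucker B)"
    using assms(2) unfolding contact_def by (simp add: of_plucker_plucker)
  also have "\<dots> = of_plucker (\<lambda>k. plucker B c / ?K c * ?K k)"
    using proportional by (rule of_plucker_cong)
  also have "\<dots> = (\<lambda>i j. plucker B c / ?K c * kernel_form ms \<phi> i j)"
    unfolding kernel_form_def by (rule of_plucker_scale)
  finally show ?thesis by blast
qed

section \<open>An explicit Legendrian foliation\<close>

definition witness_field :: "nat \<Rightarrow> nat \<Rightarrow> mpoly" where
  "witness_field d i =
    (if i = 0 then Poly_Mapping.single (mon4 d 0 0 0) 1 + Poly_Mapping.single (mon4 0 (d - 1) 0 1) 1
     else if i = 1 then Poly_Mapping.single (mon4 (d - 1) 1 0 0) 1
     else if i = 2 then Poly_Mapping.single (mon4 0 d 0 0) (-1) else 0)"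

(* Five monomials of degree d + 1 whose tangency equations for witness_field d are independent. *)
definition test_monomial :: "nat \<Rightarrow> nat \<Rightarrow> (nat \<Rightarrow>\<^sub>0 nat)" where
  "test_monomial d r =
    (if r = 0 then mon4 d 0 1 0 else if r = 1 then mon4 d 0 0 1 else if r = 2 then mon4 (d - 1) 1 1 0
     else if r = 3 then mon4 (d - 1) 1 0 1 else mon4 0 d 0 1)"

(* The standard contact form x_1 dx_0 - x_0 dx_1 + x_3 dx_2 - x_2 dx_3. *)
definition witness_form :: "nat \<Rightarrow> nat \<Rightarrow> complex" where
  "witness_form = of_plucker (\<lambda>k. if k = 0 \<or> k = 5 then 1 else 0)"

lemma basic_contraction_witness_field:
  assumes "d = Suc (Suc n)"
  shows "basic_contraction (witness_field d) 0 = Poly_Mapping.single (mon4 0 d 0 1) 1"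
    and "basic_contraction (witness_field d) 1 = Poly_Mapping.single (mon4 d 0 1 0) 1
      + Poly_Mapping.single (mon4 0 (d - 1) 1 1) 1 + Poly_Mapping.single (mon4 1 d 0 0) 1"
    and "basic_contraction (witness_field d) 2 = Poly_Mapping.single (mon4 d 0 0 1) 1
      + Poly_Mapping.single (mon4 0 (d - 1) 0 2) 1"
    and "basic_contraction (witness_field d) 3 = Poly_Mapping.single (mon4 (d - 1) 1 1 0) 1
      + Poly_Mapping.single (mon4 0 (Suc d) 0 0) 1"
    and "basic_contraction (witness_field d) 4 = Poly_Mapping.single (mon4 (d - 1) 1 0 1) 1"
    and "basic_contraction (witness_field d) 5 = Poly_Mapping.single (mon4 0 d 0 1) (-1)"
  unfolding assms basic_contraction_def witness_field_def
  by (simp_all add: var_eq_single_mon4 var_eq_single_mon4[unfolded One_nat_def]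
      mult_single single_uminus algebra_simps flip: numeral_2_eq_2)

lemma witness_test_equations:
  assumes "2 \<le> d" "r < 5"
  shows "(\<Sum>c<6. tangency_coeff (witness_field d) (test_monomial d r) c * x c) =
    [x 1, x 2, x 3, x 4, x 0 - x 5] ! r"
proof -
  obtain n where d: "d = Suc (Suc n)" using assms(1) by (metis add_2_eq_Suc le_iff_add)
  have "r \<in> {0, 1, 2, 3, 4}" using assms(2) by auto
  then show ?thesis
    unfolding tangency_coeff_def sum_lessThan_6 basic_contraction_witness_field[OF d]
    by (elim insertE emptyE)
      (simp_all add: d test_monomial_def lookup_add lookup_single when_def)
qed

lemma witness_field_VF: "1 \<le> d \<Longrightarrow> witness_field d \<in> VF d"
  unfolding VF_def witness_field_def
  by (auto intro!: hom_add hom_single_mon4 hom_zero)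

lemma witness_field_not_Rad: "witness_field d \<notin> Rad d"
proof
  assume "witness_field d \<in> Rad d"
  then obtain g where g: "\<forall>i<4. witness_field d i = g * var i" unfolding Rad_def by blast
  have "var 3 \<noteq> 0" unfolding var_def by (metis lookup_single_eq one_neq_zero lookup_zero)
  moreover have "g * var 3 = 0" using g[rule_format, of 3] by (simp add: witness_field_def)
  ultimately have "witness_field d 0 = 0" using g[rule_format, of 0] by simp
  moreover have "Poly_Mapping.lookup (witness_field d 0) (mon4 d 0 0 0) = 1"
    unfolding witness_field_def by (simp add: lookup_add lookup_single when_def)
  ultimately show False by simp
qed

lemma witness_field_tangent:
  assumes "2 \<le> d"
  shows "tangent witness_form (witness_field d)"
proof -
  obtain n where d: "d = Suc (Suc n)" using assms by (metis add_2_eq_Suc le_iff_add)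
  have "(\<Sum>i<4. form_coeff witness_form i * witness_field d i) =
      basic_contraction (witness_field d) 0 + basic_contraction (witness_field d) 5"
    unfolding witness_form_def contraction_eq_sum_plucker[OF antisym4_of_plucker] sum_lessThan_6
    by (simp add: plucker_of_plucker)
  also have "\<dots> = 0" unfolding basic_contraction_witness_field[OF d] by (simp add: single_uminus)
  finally show ?thesis unfolding tangent_def .
qed

lemma witness_field_Legendrian:
  assumes "2 \<le> d"
  shows "witness_field d \<in> Legendrian d"
proof -
  have VF: "witness_field d \<in> VF d" using assms by (simp add: witness_field_VF)
  have "contact witness_form"
    unfolding witness_form_def contact_def pfaff_of_plucker using antisym4_of_plucker by simp
  then have "witness_field d \<in> tangent_to_contact d"
    unfolding tangent_to_contact_def using assms VF witness_field_not_Rad witness_field_tangent by blast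
  with VF have "witness_field d \<in> zclosure d (tangent_to_contact d)"
    unfolding zclosure_def by blast
  then show ?thesis unfolding Legendrian_def using witness_field_not_Rad by blast
qed

lemma kernel_pfaffian_witness_field:
  assumes "2 \<le> d"
  shows "kernel_pfaffian (test_monomial d) (witness_field d) \<noteq> 0"
proof -
  let ?r = "\<lambda>i. tangency_coeff (witness_field d) (test_monomial d i)"
  let ?K = "tangency_cross_vec (test_monomial d) (witness_field d)"
  note equations = witness_test_equations[OF assms]
  have "[?K 1, ?K 2, ?K 3, ?K 4, ?K 0 - ?K 5] ! i = 0" if "i < 5" for i
    using cross_vec_orthogonal[OF that, of ?r] equations[OF that]
    unfolding tangency_cross_vec_def by simp
  from this[of 0] this[of 1] this[of 2] this[of 3] this[of 4]
  have "kernel_pfaffian (test_monomial d) (witness_field d) = ?K 0 * ?K 0"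
    unfolding kernel_pfaffian_def kernel_form_def pfaff_of_plucker by simp
  moreover have "?K 0 \<noteq> 0"
  proof
    assume "?K 0 = 0"
    then obtain x where x: "\<exists>j<6. x j \<noteq> 0" "\<forall>i<5. (\<Sum>j<6. ?r i j * x j) = 0" "x 0 = 0"
      using cross_vec_eq_0_iff[of 0 5 ?r] unfolding tangency_cross_vec_def by auto
    have "[x 1, x 2, x 3, x 4, x 0 - x 5] ! i = 0" if "i < 5" for i
      using x(2)[rule_format, OF that] equations[OF that] by simp
    from this[of 0] this[of 1] this[of 2] this[of 3] this[of 4] x(1,3) show False
      by (auto simp: less_Suc_eq numeral_eq_Suc)
  qed
  ultimately show ?thesis by simp
qed

theorem proposition7p4:
  fixes d :: nat
  assumes "d > 1"
  shows "\<exists>f \<in> polyfun.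
           (\<exists>\<phi> \<in> Legendrian d. f \<phi> \<noteq> 0) \<and>
           (\<forall>\<phi> \<in> Legendrian d. f \<phi> \<noteq> 0 \<longrightarrow>
              (\<exists>A. contact A \<and> tangent A \<phi> \<and>
                   (\<forall>B. contact B \<and> tangent B \<phi> \<longrightarrow> (\<exists>c. B = (\<lambda>i j. c * A i j)))))"
proof -
  let ?f = "kernel_pfaffian (test_monomial d)"
  have "2 \<le> d" using assms by simp
  then have "\<exists>\<phi> \<in> Legendrian d. ?f \<phi> \<noteq> 0"
    using witness_field_Legendrian kernel_pfaffian_witness_field by blast
  moreover have "\<exists>A. contact A \<and> tangent A \<phi> \<and>
      (\<forall>B. contact B \<and> tangent B \<phi> \<longrightarrow> (\<exists>c. B = (\<lambda>i j. c * A i j)))"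
    if "\<phi> \<in> Legendrian d" "?f \<phi> \<noteq> 0" for \<phi>
    using that tangent_kernel_form contact_kernel_form contact_tangent_eq_smult_kernel_form
    unfolding Legendrian_def by blast
  ultimately show ?thesis using polyfun_kernel_pfaffian by blast
qed

end
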